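(* Let $(x_1,y_1),\dots,(x_n,y_n)$ be points in $\mathbb{R}^2$, let $z_i=x_i^2+y_i^2$, and for any expressions $u,v$ write $M_u=\sum_{i=1}^n u_i$ and $M_{uv}=\sum_{i=1}^n u_iv_i$ (e.g. $M_{xz}=\sum_i x_iz_i$, $M_{zz}=\sum_i z_i^2$, $M_x=\sum_i x_i$). Define the symmetric $4\times 4$ matrices $$ \mathbf{M}=\begin{pmatrix} M_{zz} & M_{xz} & M_{yz} & M_z\\ M_{xz} & M_{xx} & M_{xy} & M_x\\ M_{yz} & M_{xy} & M_{yy} & M_y\\ M_z & M_x & M_y & n \end{pmatrix},\qquad \mathbf{B}=\begin{pmatrix} 0&0&0&-2\\ 0&1&0&0\\ 0&0&1&0\\ -2&0&0&0 \end{pmatrix}, $$ and the quartic polynomial $Q_4(\eta)=\det(\mathbf{M}-\eta\mathbf{B})$. Let $\eta_\ast=\min\{\eta\ge 0:\ Q_4(\eta)=0\}$ be the first nonnegative root of $Q_4$. Then $Q_4$ is decreasing and concave up on the interval between $\eta=0$ and $\eta_\ast$. Consequently, Newton's method applied to the equation $Q_4(\eta)=0$ with starting point $\eta=0$ always converges to $\eta_\ast$.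
   Context: This arises in Pratt's algebraic circle fit: one minimizes $\sum_{i=1}^n (Az_i+Bx_i+Cy_i+D)^2=\mathbf{A}^T\mathbf{M}\mathbf{A}$ over $\mathbf{A}=(A,B,C,D)^T$ subject to $B^2+C^2-4AD=\mathbf{A}^T\mathbf{B}\mathbf{A}=1$, and the minimum value equals the smallest nonnegative generalized eigenvalue $\eta_\ast$ of the pair $(\mathbf{M},\mathbf{B})$. *)

theory Defs
  imports "HOL-Analysis.Analysis"
begin

definition pratt_M :: "nat \<Rightarrow> (nat \<Rightarrow> real) \<Rightarrow> (nat \<Rightarrow> real) \<Rightarrow> real^4^4" where
  "pratt_M n x y =
    (let z = (\<lambda>i. (x i)\<^sup>2 + (y i)\<^sup>2);
         Mzz = (\<Sum>i<n. z i * z i); Mxz = (\<Sum>i<n. x i * z i); Myz = (\<Sum>i<n. y i * z i);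
         Mz = (\<Sum>i<n. z i); Mxx = (\<Sum>i<n. x i * x i); Mxy = (\<Sum>i<n. x i * y i);
         Mx = (\<Sum>i<n. x i); Myy = (\<Sum>i<n. y i * y i); My = (\<Sum>i<n. y i)
     in vector [vector [Mzz, Mxz, Myz, Mz],
                vector [Mxz, Mxx, Mxy, Mx],
                vector [Myz, Mxy, Myy, My],
                vector [Mz,  Mx,  My,  real n]])"

definition pratt_B :: "real^4^4" where
  "pratt_B = vector [vector [0, 0, 0, -2],
                     vector [0, 1, 0, 0],
                     vector [0, 0, 1, 0],
                     vector [-2, 0, 0, 0]]"

definition pratt_Q4 :: "nat \<Rightarrow> (nat \<Rightarrow> real) \<Rightarrow> (nat \<Rightarrow> real) \<Rightarrow> real \<Rightarrow> real" where
  "pratt_Q4 n x y \<eta> = det (pratt_M n x y - \<eta> *\<^sub>R pratt_B)"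

definition pratt_eta_star :: "nat \<Rightarrow> (nat \<Rightarrow> real) \<Rightarrow> (nat \<Rightarrow> real) \<Rightarrow> real" where
  "pratt_eta_star n x y = Inf {\<eta>. \<eta> \<ge> 0 \<and> pratt_Q4 n x y \<eta> = 0}"

fun newton_iter :: "(real \<Rightarrow> real) \<Rightarrow> real \<Rightarrow> nat \<Rightarrow> real" where
  "newton_iter f x0 0 = x0"
| "newton_iter f x0 (Suc k) =
     (let e = newton_iter f x0 k in e - f e / deriv f e)"

end

(*
  Translating the points to their centroid does not change Q4, and for centred data
    Q4(e) = (N m - (p + q + 2 e)^2) det (C - e I) - N w^T adj (C - e I) w,
  with C = [[p, r], [r, q]] the scatter matrix, w = (Sum x z, Sum y z) and m = Sum z^2.
  Q4(0) = det M is a Gram determinant, hence nonnegative, while Q4 is nonpositive at the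
  smallest eigenvalue of C; so eta_star exists and lies below that eigenvalue. There det (C - e I)
  and the adjugate form are nonnegative, so positivity of Q4 on [0, eta_star) forces the first
  factor to be nonnegative, and this makes Q4'' >= 0 on [0, eta_star]. A convex function that is
  positive up to its first root decreases there, and Newton's method started to the left of
  that root increases monotonically to it.
*)
theory Submission
  imports Defs
begin

lemma first_root_Inf:
  fixes f :: "real \<Rightarrow> real"
  assumes cont: "continuous_on {a..} f" and f_a: "0 \<le> f a" and "a \<le> c" and "f c = 0"
  defines "r \<equiv> Inf {x. a \<le> x \<and> f x = 0}"
  shows "a \<le> r \<and> r \<le> c \<and> f r = 0 \<and> (\<forall>x. a \<le> x \<and> x < r \<longrightarrow> 0 < f x)"
proof -
  let ?Z = "{x. a \<le> x \<and> f x = 0}"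
  have bdd: "bdd_below ?Z"
    by (rule bdd_belowI[of _ a]) auto
  have "closed ?Z"
    using continuous_closed_preimage_constant[OF cont closed_atLeast] by (simp add: Collect_conj_eq)
  then have "r \<in> ?Z"
    unfolding r_def using assms by (intro closed_contains_Inf bdd) auto
  moreover have "r \<le> c"
    unfolding r_def using assms by (intro cInf_lower bdd) auto
  moreover have "0 < f x" if "a \<le> x" "x < r" for x
  proof (rule ccontr)
    assume "\<not> 0 < f x"
    moreover have "continuous_on {a..x} f"
      using cont by (rule continuous_on_subset) auto
    ultimately obtain y where "a \<le> y" "y \<le> x" "f y = 0"
      using IVT2'[of f x 0 a] f_a \<open>a \<le> x\<close> by auto
    then have "r \<le> y"
      unfolding r_def by (intro cInf_lower bdd) auto
    with \<open>y \<le> x\<close> \<open>x < r\<close> show False by simp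
  qed
  ultimately show ?thesis by auto
qed

lemma convex_on_decreasing_before_root:
  fixes f :: "real \<Rightarrow> real"
  assumes conv: "convex_on {a..r} f" and root: "f r = 0" and pos: "\<And>x. a \<le> x \<Longrightarrow> x < r \<Longrightarrow> 0 < f x"
    and "a \<le> s" "s < t" "t \<le> r"
  shows "f t < f s"
proof -
  have "f t \<le> (f s - f r) / (r - s) * (r - t) + f r"
    using assms by (intro convex_onD_Icc'' convex_on_subset[OF conv]) auto
  also have "\<dots> = f s * ((r - t) / (r - s))"
    using root by simp
  also have "\<dots> < f s * 1"
    using assms pos[of s] by (intro mult_strict_left_mono) auto
  finally show ?thesis by simp
qed

lemma newton_iter_Suc:
  fixes f f' :: "real \<Rightarrow> real"
  assumes "\<And>x. (f has_real_derivative f' x) (at x)"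
  shows "newton_iter f a (Suc k) = newton_iter f a k - f (newton_iter f a k) / f' (newton_iter f a k)"
  using DERIV_imp_deriv[OF assms] by (simp add: Let_def)

lemma tangent_below_root_slope_neg:
  fixes f f' :: "real \<Rightarrow> real"
  assumes "f r = 0" "0 < f x" "x < r" "f' x * (r - x) \<le> f r - f x"
  shows "f' x < 0"
proof -
  have "f' x * (r - x) < 0"
    using assms by simp
  then show ?thesis
    using \<open>x < r\<close> by (simp add: mult_less_0_iff)
qed

lemma newton_step_below_root:
  fixes f f' :: "real \<Rightarrow> real"
  assumes "f r = 0" "0 < f x" "x < r" and tangent: "f' x * (r - x) \<le> f r - f x"
  shows "x \<le> x - f x / f' x" "x - f x / f' x \<le> r"
proof -
  have neg: "f' x < 0"
    using assms by (rule tangent_below_root_slope_neg)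
  then show "x \<le> x - f x / f' x"
    using \<open>0 < f x\<close> by (simp add: divide_pos_neg less_imp_le)
  have "- f x / f' x \<le> r - x"
    using tangent \<open>f r = 0\<close> by (subst neg_divide_le_eq[OF neg]) (simp add: mult.commute)
  then show "x - f x / f' x \<le> r"
    by simp
qed

lemma newton_iter_incseq_below_root:
  fixes f f' :: "real \<Rightarrow> real"
  assumes deriv: "\<And>x. (f has_real_derivative f' x) (at x)"
    and "a \<le> r" and root: "f r = 0" and pos: "\<And>x. a \<le> x \<Longrightarrow> x < r \<Longrightarrow> 0 < f x"
    and tangent: "\<And>x. a \<le> x \<Longrightarrow> x < r \<Longrightarrow> f' x * (r - x) \<le> f r - f x"
  shows "incseq (newton_iter f a)" "a \<le> newton_iter f a k" "newton_iter f a k \<le> r"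
proof -
  have step: "x \<le> x - f x / f' x \<and> x - f x / f' x \<le> r" if "a \<le> x" "x \<le> r" for x
  proof (cases "x = r")
    case False
    with that have "a \<le> x" "x < r"
      by auto
    then have "0 < f x" "f' x * (r - x) \<le> f r - f x"
      by (auto intro: pos tangent)
    with newton_step_below_root[of f r x f'] root \<open>x < r\<close> show ?thesis
      by simp
  qed (simp add: root)
  have bounds: "a \<le> newton_iter f a k \<and> newton_iter f a k \<le> r" for k
  proof (induction k)
    case 0
    show ?case
      using \<open>a \<le> r\<close> by simp
  next
    case (Suc k)
    then show ?case
      unfolding newton_iter_Suc[OF deriv] using step[of "newton_iter f a k"] by auto
  qed
  then show "a \<le> newton_iter f a k" "newton_iter f a k \<le> r"
    by auto
  show "incseq (newton_iter f a)"
    unfolding incseq_Suc_iff newton_iter_Suc[OF deriv] using bounds step by blast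
qed

lemma newton_iter_tendsto_root:
  fixes f f' :: "real \<Rightarrow> real"
  assumes deriv: "\<And>x. (f has_real_derivative f' x) (at x)"
    and cont: "continuous_on {a..r} f'"
    and "a \<le> r" and root: "f r = 0" and pos: "\<And>x. a \<le> x \<Longrightarrow> x < r \<Longrightarrow> 0 < f x"
    and tangent: "\<And>x. a \<le> x \<Longrightarrow> x < r \<Longrightarrow> f' x * (r - x) \<le> f r - f x"
  shows "newton_iter f a \<longlonglongrightarrow> r"
proof -
  define step where "step x = x - f x / f' x" for x
  note iter = newton_iter_incseq_below_root[OF assms(1,3-6)]
  obtain L where lim: "newton_iter f a \<longlonglongrightarrow> L"
    using iter by (metis LIMSEQ_incseq_SUP bdd_aboveI2)
  have "a \<le> L" "L \<le> r"
    using iter by (auto intro: LIMSEQ_le_const[OF lim] LIMSEQ_le_const2[OF lim])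
  moreover have False if "L < r"
  proof -
    have in_dom: "newton_iter f a k \<in> {a..<r}" for k
      using iter(2,3)[of k] incseq_le[OF iter(1) lim, of k] that by auto
    have slope_neg: "f' x < 0" if "a \<le> x" "x < r" for x
      using root pos[OF that] \<open>x < r\<close> tangent[OF that] by (rule tangent_below_root_slope_neg)
    have "continuous_on {a..<r} f"
      using deriv by (intro continuous_at_imp_continuous_on ballI DERIV_isCont)
    moreover have "continuous_on {a..<r} f'"
      using cont by (rule continuous_on_subset) auto
    moreover have "f' x \<noteq> 0" if "x \<in> {a..<r}" for x
      using slope_neg[of x] that by auto
    ultimately have "continuous_on {a..<r} step"
      unfolding step_def by (intro continuous_intros) auto
    then have "(\<lambda>k. step (newton_iter f a k)) \<longlonglongrightarrow> step L"
      by (rule continuous_on_tendsto_compose[OF _ lim])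
        (use in_dom \<open>a \<le> L\<close> that in \<open>auto intro: always_eventually\<close>)
    moreover have "(\<lambda>k. step (newton_iter f a k)) \<longlonglongrightarrow> L"
      using LIMSEQ_Suc[OF lim] unfolding newton_iter_Suc[OF deriv] step_def .
    ultimately have "step L = L"
      by (rule LIMSEQ_unique)
    then show False
      using slope_neg[OF \<open>a \<le> L\<close> that] pos[OF \<open>a \<le> L\<close> that] by (simp add: step_def)
  qed
  ultimately show ?thesis
    using lim by fastforce
qed

lemma quadratic_form_nonneg:
  fixes P R c x y :: real
  assumes "0 \<le> P" "0 \<le> R" "c\<^sup>2 \<le> P * R"
  shows "0 \<le> x\<^sup>2 * R - 2 * x * y * c + y\<^sup>2 * P"
proof (cases "R = 0")
  case True
  then show ?thesis using assms by simp
next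
  case False
  then have "0 < R" using assms by simp
  have "R * (x\<^sup>2 * R - 2 * x * y * c + y\<^sup>2 * P) = (R * x - c * y)\<^sup>2 + (P * R - c\<^sup>2) * y\<^sup>2"
    by algebra
  also have "\<dots> \<ge> 0"
    using assms by simp
  finally show ?thesis
    using \<open>0 < R\<close> by (simp add: zero_le_mult_iff)
qed

(*
  Centred data of N points: C = [[p, r], [r, q]] is the scatter matrix, (u, v) = (Sum x z, Sum y z)
  and m = Sum z^2. Then cov_det e = det (C - e I), cov_adj e = (u, v) adj (C - e I) (u, v)^T,
  and eig_min is the smaller eigenvalue of C.
*)
locale pratt_quartic =
  fixes N m p q r u v :: real
begin

definition cov_det :: "real \<Rightarrow> real" where
  "cov_det e = (p - e) * (q - e) - r\<^sup>2"

definition cov_adj :: "real \<Rightarrow> real" where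
  "cov_adj e = u\<^sup>2 * (q - e) - 2 * u * v * r + v\<^sup>2 * (p - e)"

definition z_factor :: "real \<Rightarrow> real" where
  "z_factor e = N * m - (p + q + 2 * e)\<^sup>2"

definition quartic :: "real \<Rightarrow> real" where
  "quartic e = z_factor e * cov_det e - N * cov_adj e"

definition quartic' :: "real \<Rightarrow> real" where
  "quartic' e = - 4 * (p + q + 2 * e) * cov_det e + z_factor e * (2 * e - (p + q)) + N * (u\<^sup>2 + v\<^sup>2)"

definition quartic'' :: "real \<Rightarrow> real" where
  "quartic'' e = 2 * z_factor e + 8 * ((p + q)\<^sup>2 - 4 * e\<^sup>2) - 8 * cov_det e"

definition eig_min :: real where
  "eig_min = (p + q - sqrt ((p - q)\<^sup>2 + 4 * r\<^sup>2)) / 2"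

end

locale pratt_quartic_psd = pratt_quartic +
  assumes N_nonneg: "0 \<le> N" and p_nonneg: "0 \<le> p" and q_nonneg: "0 \<le> q"
    and r_square_le: "r\<^sup>2 \<le> p * q"
begin

lemma quartic_has_derivative: "(quartic has_real_derivative quartic' e) (at e)"
  unfolding quartic_def[abs_def] quartic'_def z_factor_def cov_det_def cov_adj_def
  by (auto intro!: derivative_eq_intros simp: algebra_simps power2_eq_square)

lemma quartic'_has_derivative: "(quartic' has_real_derivative quartic'' e) (at e)"
  unfolding quartic'_def[abs_def] quartic''_def z_factor_def cov_det_def
  by (auto intro!: derivative_eq_intros simp: algebra_simps power2_eq_square)

lemma eig_min_bounds: "0 \<le> eig_min" "eig_min \<le> p" "eig_min \<le> q"
proof -
  have "sqrt ((p - q)\<^sup>2 + 4 * r\<^sup>2) \<le> sqrt ((p + q)\<^sup>2)"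
    using r_square_le by (intro real_sqrt_le_mono) (simp add: power2_eq_square algebra_simps)
  then show "0 \<le> eig_min"
    using p_nonneg q_nonneg by (simp add: eig_min_def)
  have "\<bar>p - q\<bar> \<le> sqrt ((p - q)\<^sup>2 + 4 * r\<^sup>2)"
    using real_sqrt_le_mono[of "(p - q)\<^sup>2" "(p - q)\<^sup>2 + 4 * r\<^sup>2"] by simp
  then show "eig_min \<le> p" "eig_min \<le> q"
    by (auto simp: eig_min_def)
qed

lemma cov_det_factor: "cov_det e = (e - eig_min) * (e - (p + q - eig_min))"
proof -
  have "(sqrt ((p - q)\<^sup>2 + 4 * r\<^sup>2))\<^sup>2 = (p - q)\<^sup>2 + 4 * r\<^sup>2"
    by simp
  then show ?thesis
    unfolding cov_det_def eig_min_def by (simp add: field_simps power2_eq_square)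
qed

lemma cov_det_nonneg: "e \<le> eig_min \<Longrightarrow> 0 \<le> cov_det e"
  using eig_min_bounds by (simp add: cov_det_factor mult_nonpos_nonpos)

lemma cov_adj_nonneg: "e \<le> eig_min \<Longrightarrow> 0 \<le> cov_adj e"
  using quadratic_form_nonneg[of "p - e" "q - e" r u v] cov_det_nonneg[of e] eig_min_bounds
  by (simp add: cov_adj_def cov_det_def)

lemma quartic_eig_min_nonpos: "quartic eig_min \<le> 0"
  using cov_adj_nonneg[of eig_min] N_nonneg by (simp add: quartic_def cov_det_factor)

lemma z_factor_pos:
  assumes "e \<le> eig_min" "0 < quartic e"
  shows "0 < z_factor e"
proof (rule ccontr)
  assume "\<not> 0 < z_factor e"
  then have "z_factor e * cov_det e \<le> 0"
    using cov_det_nonneg[OF assms(1)] by (simp add: mult_nonpos_nonneg)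
  moreover have "0 \<le> N * cov_adj e"
    using cov_adj_nonneg[OF assms(1)] N_nonneg by simp
  ultimately show False
    using assms(2) by (simp add: quartic_def)
qed

lemma quartic''_nonneg:
  assumes "0 \<le> e" "e \<le> eig_min" "0 \<le> z_factor e"
  shows "0 \<le> quartic'' e"
proof -
  define d where "d = (p + q)\<^sup>2 - 4 * e\<^sup>2"
  have "2 * e \<le> p + q"
    using assms eig_min_bounds by simp
  then have "2 * e * e \<le> (p + q) * e"
    using \<open>0 \<le> e\<close> by (rule mult_right_mono)
  then have "(p + q - 2 * e)\<^sup>2 \<le> d"
    by (simp add: d_def power2_eq_square algebra_simps)
  moreover have "4 * cov_det e = (p + q - 2 * e)\<^sup>2 - (p - q)\<^sup>2 - 4 * r\<^sup>2"
    by (simp add: cov_det_def power2_eq_square algebra_simps)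
  ultimately have "4 * cov_det e \<le> d" "0 \<le> d"
    using zero_le_power2[of "p + q - 2 * e"] zero_le_power2[of "p - q"] zero_le_power2[of r]
    by linarith+
  with assms(3) show ?thesis
    unfolding quartic''_def d_def[symmetric] by linarith
qed

lemma quartic''_nonneg_before_root:
  assumes "0 < s" "s \<le> eig_min" and pos: "\<And>e. 0 \<le> e \<Longrightarrow> e < s \<Longrightarrow> 0 < quartic e"
    and "0 \<le> e" "e \<le> s"
  shows "0 \<le> quartic'' e"
proof -
  have "{0..<s} \<subseteq> {e. 0 \<le> z_factor e}"
    using assms(2) by (auto intro!: less_imp_le[OF z_factor_pos] pos)
  moreover have "closed {e. 0 \<le> z_factor e}"
    unfolding z_factor_def by (intro closed_Collect_le continuous_intros)
  ultimately have "closure {0..<s} \<subseteq> {e. 0 \<le> z_factor e}"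
    by (rule closure_minimal)
  then show ?thesis
    using assms by (intro quartic''_nonneg) auto
qed

lemma quartic_convex_before_root:
  assumes "s \<le> eig_min" "\<And>e. 0 \<le> e \<Longrightarrow> e < s \<Longrightarrow> 0 < quartic e"
  shows "convex_on {0..s} quartic"
proof (cases "0 < s")
  case True
  then show ?thesis
    using assms quartic_has_derivative quartic'_has_derivative quartic''_nonneg_before_root
    by (intro f''_ge0_imp_convex) auto
next
  case False
  then have "{0..s} \<subseteq> {0}" by auto
  then show ?thesis
    by (auto simp: convex_on_def subset_singleton_iff simp flip: distrib_right)
qed

lemma quartic_tangent_before_root:
  assumes "s \<le> eig_min" "\<And>e. 0 \<le> e \<Longrightarrow> e < s \<Longrightarrow> 0 < quartic e" "0 \<le> x" "x < s"
  shows "quartic' x * (s - x) \<le> quartic s - quartic x"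
  using assms quartic_has_derivative quartic'_has_derivative
    quartic''_nonneg_before_root[of s, OF _ assms(1,2)]
  by (intro f''_imp_f'[where C = "{0..s}" and f' = quartic' and f'' = quartic'']) auto

theorem quartic_first_root:
  assumes "0 \<le> quartic 0"
  defines "es \<equiv> Inf {e. e \<ge> 0 \<and> quartic e = 0}"
  shows "es \<ge> 0 \<and> quartic es = 0
    \<and> (\<forall>a b. 0 \<le> a \<and> a < b \<and> b \<le> es \<longrightarrow> quartic b < quartic a)
    \<and> convex_on {0..es} quartic
    \<and> (newton_iter quartic 0 \<longlonglongrightarrow> es)"
proof -
  have cont: "continuous_on A quartic" "continuous_on A quartic'" for A
    using quartic_has_derivative quartic'_has_derivative
    by (meson DERIV_isCont continuous_at_imp_continuous_on)+
  obtain c where "0 \<le> c" "c \<le> eig_min" "quartic c = 0"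
    using IVT2'[of quartic eig_min 0 0] quartic_eig_min_nonpos assms(1) eig_min_bounds(1) cont(1) by auto
  then have "0 \<le> es" "es \<le> eig_min" "quartic es = 0" and pos: "\<And>e. 0 \<le> e \<Longrightarrow> e < es \<Longrightarrow> 0 < quartic e"
    using first_root_Inf[OF cont(1) assms(1), of c] unfolding es_def by auto
  moreover have "convex_on {0..es} quartic"
    using quartic_convex_before_root \<open>es \<le> eig_min\<close> pos by blast
  moreover have "quartic b < quartic a" if "0 \<le> a" "a < b" "b \<le> es" for a b
    using convex_on_decreasing_before_root[OF \<open>convex_on {0..es} quartic\<close>] \<open>quartic es = 0\<close> pos that
    by blast
  moreover have "newton_iter quartic 0 \<longlonglongrightarrow> es"
    using \<open>es \<le> eig_min\<close> pos \<open>0 \<le> es\<close> \<open>quartic es = 0\<close>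
    by (intro newton_iter_tendsto_root[OF quartic_has_derivative] cont quartic_tangent_before_root)
  ultimately show ?thesis
    by blast
qed

end

lemma vector_4 [simp]:
  "(vector [a, b, c, d] :: ('a::zero)^4) $ 1 = a"
  "(vector [a, b, c, d] :: ('a::zero)^4) $ 2 = b"
  "(vector [a, b, c, d] :: ('a::zero)^4) $ 3 = c"
  "(vector [a, b, c, d] :: ('a::zero)^4) $ 4 = d"
  unfolding vector_def by simp_all

lemma det_4:
  "det (A::'a::comm_ring_1^4^4) =
  A$1$1*A$2$2*A$3$3*A$4$4 - A$1$1*A$2$2*A$3$4*A$4$3 - A$1$1*A$2$3*A$3$2*A$4$4 + A$1$1*A$2$3*A$3$4*A$4$2
 + A$1$1*A$2$4*A$3$2*A$4$3 - A$1$1*A$2$4*A$3$3*A$4$2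
 - A$1$2*A$2$1*A$3$3*A$4$4 + A$1$2*A$2$1*A$3$4*A$4$3 + A$1$2*A$2$3*A$3$1*A$4$4 - A$1$2*A$2$3*A$3$4*A$4$1
 - A$1$2*A$2$4*A$3$1*A$4$3 + A$1$2*A$2$4*A$3$3*A$4$1
 + A$1$3*A$2$1*A$3$2*A$4$4 - A$1$3*A$2$1*A$3$4*A$4$2 - A$1$3*A$2$2*A$3$1*A$4$4 + A$1$3*A$2$2*A$3$4*A$4$1
 + A$1$3*A$2$4*A$3$1*A$4$2 - A$1$3*A$2$4*A$3$2*A$4$1
 - A$1$4*A$2$1*A$3$2*A$4$3 + A$1$4*A$2$1*A$3$3*A$4$2 + A$1$4*A$2$2*A$3$1*A$4$3 - A$1$4*A$2$2*A$3$3*A$4$1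
 - A$1$4*A$2$3*A$3$1*A$4$2 + A$1$4*A$2$3*A$3$2*A$4$1"
proof -
  have f1: "finite {2::4, 3, 4}" "1 \<notin> {2::4, 3, 4}" by auto
  have f2: "finite {3::4, 4}" "2 \<notin> {3::4, 4}" by auto
  have f3: "finite {4::4}" "3 \<notin> {4::4}" by auto
  show ?thesis
    unfolding det_def UNIV_4
    unfolding sum_over_permutations_insert[OF f1]
    unfolding sum_over_permutations_insert[OF f2]
    unfolding sum_over_permutations_insert[OF f3]
    unfolding permutes_sing
    by (simp add: sign_swap_id permutation_swap_id sign_compose permutation_compose sign_id swap_id_eq algebra_simps)
qed

(* The hypotheses express the moments of the points (x + a, y + b) by those of centred points (x, y). *)
lemma det_pratt_pencil_translated:
  fixes N m p q r u v a b e :: real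
  assumes "Mx = N * a" "My = N * b"
    and "Mxx = p + N * a\<^sup>2" "Myy = q + N * b\<^sup>2" "Mxy = r + N * a * b"
    and "Mz = p + q + N * (a\<^sup>2 + b\<^sup>2)"
    and "Mxz = u + 2 * a * p + 2 * b * r + a * (p + q) + N * a * (a\<^sup>2 + b\<^sup>2)"
    and "Myz = v + 2 * b * q + 2 * a * r + b * (p + q) + N * b * (a\<^sup>2 + b\<^sup>2)"
    and "Mzz = m + 4 * a\<^sup>2 * p + 4 * b\<^sup>2 * q + 8 * a * b * r + 4 * a * u + 4 * b * v
      + 2 * (a\<^sup>2 + b\<^sup>2) * (p + q) + N * (a\<^sup>2 + b\<^sup>2)\<^sup>2"
  shows "det (vector [vector [Mzz, Mxz, Myz, Mz], vector [Mxz, Mxx, Mxy, Mx],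
      vector [Myz, Mxy, Myy, My], vector [Mz, Mx, My, N]] - e *\<^sub>R pratt_B)
    = pratt_quartic.quartic N m p q r u v e"
  unfolding det_4 pratt_B_def assms pratt_quartic.quartic_def pratt_quartic.z_factor_def
    pratt_quartic.cov_det_def pratt_quartic.cov_adj_def
  by simp algebra

lemma pratt_Q4_translated:
  fixes n :: nat and xt yt zt :: "nat \<Rightarrow> real" and a b :: real
  assumes centred: "(\<Sum>i<n. xt i) = 0" "(\<Sum>i<n. yt i) = 0"
  defines "zt \<equiv> \<lambda>i. (xt i)\<^sup>2 + (yt i)\<^sup>2"
    and "m \<equiv> \<Sum>i<n. zt i * zt i" and "p \<equiv> \<Sum>i<n. xt i * xt i" and "q \<equiv> \<Sum>i<n. yt i * yt i"
    and "r \<equiv> \<Sum>i<n. xt i * yt i" and "u \<equiv> \<Sum>i<n. xt i * zt i" and "v \<equiv> \<Sum>i<n. yt i * zt i"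
  shows "pratt_Q4 n (\<lambda>i. xt i + a) (\<lambda>i. yt i + b) = pratt_quartic.quartic n m p q r u v"
  unfolding fun_eq_iff pratt_Q4_def pratt_M_def Let_def
  by (intro allI det_pratt_pencil_translated;
      simp add: zt_def m_def p_def q_def r_def u_def v_def power2_eq_square ring_distribs
        mult.assoc[symmetric] sum.distrib sum_distrib_left[symmetric] sum_distrib_right[symmetric] centred;
      simp add: algebra_simps sum_distrib_left)

lemma sum_product_linear_combination:
  fixes f g h k :: "'a \<Rightarrow> real"
  shows "(\<Sum>i\<in>I. (\<alpha> * f i + \<beta> * g i) * (\<gamma> * h i + \<delta> * k i)) =
    \<alpha> * \<gamma> * (\<Sum>i\<in>I. f i * h i) + \<alpha> * \<delta> * (\<Sum>i\<in>I. f i * k i)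
    + \<beta> * \<gamma> * (\<Sum>i\<in>I. g i * h i) + \<beta> * \<delta> * (\<Sum>i\<in>I. g i * k i)"
  by (simp add: algebra_simps sum.distrib sum_distrib_left)

lemma gram_det3_nonneg:
  fixes f g h :: "'a \<Rightarrow> real" and I :: "'a set"
  defines "A \<equiv> \<Sum>i\<in>I. f i * f i" and "B \<equiv> \<Sum>i\<in>I. g i * g i" and "C \<equiv> \<Sum>i\<in>I. h i * h i"
    and "D \<equiv> \<Sum>i\<in>I. f i * g i" and "E \<equiv> \<Sum>i\<in>I. f i * h i" and "F \<equiv> \<Sum>i\<in>I. g i * h i"
  shows "0 \<le> A * (B * C - F\<^sup>2) - D * (D * C - F * E) + E * (D * F - B * E)"
proof -
  have cauchy_schwarz: "(\<Sum>i\<in>I. a i * b i)\<^sup>2 \<le> (\<Sum>i\<in>I. a i * a i) * (\<Sum>i\<in>I. b i * b i)"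
    for a b :: "'a \<Rightarrow> real"
    using Cauchy_Schwarz_ineq_sum[of a b I] by (simp add: power2_eq_square)
  have DF: "D\<^sup>2 \<le> A * B" "F\<^sup>2 \<le> B * C"
    using cauchy_schwarz[of f g] cauchy_schwarz[of g h] by (simp_all add: A_def B_def C_def D_def F_def)
  have "0 \<le> B"
    unfolding B_def by (simp add: sum_nonneg)
  then consider "B = 0" | "0 < B"
    by linarith
  then show ?thesis
  proof cases
    case 1
    then have "D = 0" "F = 0"
      using DF by simp_all
    with 1 show ?thesis by simp
  next
    case 2
    \<comment> \<open>Cauchy--Schwarz for the components of f and h orthogonal to g\<close>
    define P where "P i = B * f i - D * g i" for i
    define R where "R i = B * h i - F * g i" for i
    have "(\<Sum>i\<in>I. P i * P i) = B * (A * B - D\<^sup>2)" "(\<Sum>i\<in>I. R i * R i) = B * (B * C - F\<^sup>2)"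
      "(\<Sum>i\<in>I. P i * R i) = B * (B * E - D * F)"
      unfolding P_def R_def diff_conv_add_uminus minus_mult_left sum_product_linear_combination
      unfolding A_def B_def C_def D_def E_def F_def
      by (simp_all add: power2_eq_square algebra_simps)
    then have "B\<^sup>2 * (B * E - D * F)\<^sup>2 \<le> B\<^sup>2 * ((A * B - D\<^sup>2) * (B * C - F\<^sup>2))"
      using cauchy_schwarz[of P R] by (simp add: power_mult_distrib power2_eq_square mult_ac)
    then have "(B * E - D * F)\<^sup>2 \<le> (A * B - D\<^sup>2) * (B * C - F\<^sup>2)"
      using \<open>0 < B\<close> by simp
    moreover have "B * (A * (B * C - F\<^sup>2) - D * (D * C - F * E) + E * (D * F - B * E))
        = (A * B - D\<^sup>2) * (B * C - F\<^sup>2) - (B * E - D * F)\<^sup>2"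
      by algebra
    ultimately have "0 \<le> B * (A * (B * C - F\<^sup>2) - D * (D * C - F * E) + E * (D * F - B * E))"
      by simp
    then show ?thesis
      using \<open>0 < B\<close> by (simp add: zero_le_mult_iff)
  qed
qed

lemma pratt_quartic_at_0_nonneg:
  fixes n :: nat and xt yt zt :: "nat \<Rightarrow> real"
  assumes centred: "(\<Sum>i<n. xt i) = 0" "(\<Sum>i<n. yt i) = 0"
  defines "zt \<equiv> \<lambda>i. (xt i)\<^sup>2 + (yt i)\<^sup>2"
    and "m \<equiv> \<Sum>i<n. zt i * zt i" and "p \<equiv> \<Sum>i<n. xt i * xt i" and "q \<equiv> \<Sum>i<n. yt i * yt i"
    and "r \<equiv> \<Sum>i<n. xt i * yt i" and "u \<equiv> \<Sum>i<n. xt i * zt i" and "v \<equiv> \<Sum>i<n. yt i * zt i"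
  shows "0 \<le> pratt_quartic.quartic n m p q r u v 0"
proof (cases "n = 0")
  case True
  then show ?thesis
    by (simp add: m_def p_def q_def r_def u_def v_def pratt_quartic.quartic_def
        pratt_quartic.z_factor_def pratt_quartic.cov_det_def pratt_quartic.cov_adj_def)
next
  case False
  define s where "s = p + q"
  define Z where "Z i = zt i - s / n" for i
  have "(\<Sum>i<n. zt i) = s"
    by (simp add: s_def p_def q_def zt_def power2_eq_square sum.distrib)
  then have "(\<Sum>i<n. Z i * Z i) = m - s\<^sup>2 / n"
    using False by (simp add: Z_def m_def algebra_simps sum.distrib sum_subtractf power2_eq_square
        sum_distrib_left[symmetric] sum_distrib_right[symmetric] sum_divide_distrib[symmetric])
  moreover have "(\<Sum>i<n. Z i * xt i) = u" "(\<Sum>i<n. Z i * yt i) = v"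
    by (simp_all add: Z_def u_def v_def algebra_simps sum_subtractf centred
        sum_distrib_left[symmetric] sum_divide_distrib[symmetric])
  ultimately have "0 \<le> (m - s\<^sup>2 / n) * (q * p - r\<^sup>2) - u * (u * q - r * v) + v * (u * r - p * v)"
    using gram_det3_nonneg[of Z "{..<n}" xt yt] by (simp add: p_def q_def r_def mult.commute)
  moreover have "pratt_quartic.quartic n m p q r u v 0
      = n * ((m - s\<^sup>2 / n) * (q * p - r\<^sup>2) - u * (u * q - r * v) + v * (u * r - p * v))"
    using False by (simp add: pratt_quartic.quartic_def pratt_quartic.z_factor_def pratt_quartic.cov_det_def
        pratt_quartic.cov_adj_def s_def field_simps power2_eq_square)
  ultimately show ?thesis
    by simp
qed

theorem theorem1:
  fixes n :: nat and x y :: "nat \<Rightarrow> real"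
  defines "Q \<equiv> pratt_Q4 n x y" and "\<eta>s \<equiv> pratt_eta_star n x y"
  shows "\<eta>s \<ge> 0 \<and> Q \<eta>s = 0
    \<and> (\<forall>a b. 0 \<le> a \<and> a < b \<and> b \<le> \<eta>s \<longrightarrow> Q b < Q a)
    \<and> convex_on {0..\<eta>s} Q
    \<and> (newton_iter Q 0 \<longlonglongrightarrow> \<eta>s)"
proof -
  define x0 where "x0 = (\<Sum>i<n. x i) / n"
  define y0 where "y0 = (\<Sum>i<n. y i) / n"
  define xt where "xt i = x i - x0" for i
  define yt where "yt i = y i - y0" for i
  define zt where "zt i = (xt i)\<^sup>2 + (yt i)\<^sup>2" for i
  define m p q r u v where "m = (\<Sum>i<n. zt i * zt i)" and "p = (\<Sum>i<n. xt i * xt i)"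
    and "q = (\<Sum>i<n. yt i * yt i)" and "r = (\<Sum>i<n. xt i * yt i)"
    and "u = (\<Sum>i<n. xt i * zt i)" and "v = (\<Sum>i<n. yt i * zt i)"
  note moments = m_def p_def q_def r_def u_def v_def zt_def
  have centred: "(\<Sum>i<n. xt i) = 0" "(\<Sum>i<n. yt i) = 0"
    by (cases "n = 0"; simp add: xt_def yt_def x0_def y0_def sum_subtractf)+
  have "x = (\<lambda>i. xt i + x0)" "y = (\<lambda>i. yt i + y0)"
    by (simp_all add: xt_def yt_def)
  then have Q: "Q = pratt_quartic.quartic n m p q r u v"
    unfolding Q_def moments using pratt_Q4_translated[OF centred] by simp
  interpret pratt_quartic_psd n m p q r u v
    using Cauchy_Schwarz_ineq_sum[of xt yt "{..<n}"]
    by unfold_locales (simp_all add: moments sum_nonneg power2_eq_square)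
  have \<eta>s: "\<eta>s = Inf {e. e \<ge> 0 \<and> quartic e = 0}"
    unfolding \<eta>s_def pratt_eta_star_def Q_def[symmetric] Q ..
  have "0 \<le> quartic 0"
    using pratt_quartic_at_0_nonneg[OF centred] unfolding moments by simp
  then show ?thesis
    unfolding Q \<eta>s by (rule quartic_first_root)
qed

end
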